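(* Let $\trianglerighteq$ denote one of the relations $\ge,\le,=,>,<$ and $\vartriangleleft$ its negation. Let $F\subseteq\bar L^0(\mathcal G)$ and $Y_0\in\bar L^0(\mathcal G)$, and define $$\mathcal A=\{A\in\mathcal G:\ Y\trianglerighteq Y_0\text{ on }A\ \ \forall Y\in F\},\qquad \mathcal A^\vdash=\{A\in\mathcal G:\ \exists Y\in F\text{ with }Y\vartriangleleft Y_0\text{ on }A\}.$$ Assume that for every sequence of pairwise disjoint sets $A_i\in\mathcal A^\vdash$ and $Y_i\in F$ with $Y_i\vartriangleleft Y_0$ on $A_i$, one has $\sum_{i=1}^\infty Y_i\mathbf 1_{A_i}\in F$. Then there exist $A_M\in\mathcal A$ and $A_M^\vdash\in\mathcal A^\vdash$ with $\mathbb P(A_M\cap A_M^\vdash)=0$ and $\mathbb P(A_M\cup A_M^\vdash)=1$; in particular $Y\trianglerighteq Y_0$ on $A_M$ for all $Y\in F$, and $\overline Y\vartriangleleft Y_0$ on $A_M^\vdash$ for some $\overline Y\in F$.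
   Context: $(\Omega,\mathcal F,\mathbb P)$ is a probability space and $\mathcal G\subseteq\mathcal F$ a sub-$\sigma$-algebra. $\bar L^0(\mathcal G)$ denotes $\mathcal G$-measurable random variables with values in $\mathbb R\cup\{+\infty\}$. "$Y\trianglerighteq Y_0$ on $A$" means the relation holds $\mathbb P$-a.s. on $A$. *)

theory Defs
  imports "HOL-Probability.Probability"
begin

definition L0bar :: "'a measure \<Rightarrow> ('a \<Rightarrow> ereal) set" where
  "L0bar G = {X \<in> borel_measurable G. \<forall>\<omega>\<in>space G. X \<omega> \<noteq> -\<infinity>}"

definition holds_on :: "'a measure \<Rightarrow> (ereal \<Rightarrow> ereal \<Rightarrow> bool) \<Rightarrow> ('a \<Rightarrow> ereal) \<Rightarrow> ('a \<Rightarrow> ereal) \<Rightarrow> 'a set \<Rightarrow> bool" where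
  "holds_on M R Y Y0 A \<longleftrightarrow> (AE \<omega> in M. \<omega> \<in> A \<longrightarrow> R (Y \<omega>) (Y0 \<omega>))"

definition setA :: "'a measure \<Rightarrow> 'a measure \<Rightarrow> (ereal \<Rightarrow> ereal \<Rightarrow> bool) \<Rightarrow> ('a \<Rightarrow> ereal) set \<Rightarrow> ('a \<Rightarrow> ereal) \<Rightarrow> 'a set set" where
  "setA M G R F Y0 = {A \<in> sets G. \<forall>Y\<in>F. holds_on M R Y Y0 A}"

definition setA_neg :: "'a measure \<Rightarrow> 'a measure \<Rightarrow> (ereal \<Rightarrow> ereal \<Rightarrow> bool) \<Rightarrow> ('a \<Rightarrow> ereal) set \<Rightarrow> ('a \<Rightarrow> ereal) \<Rightarrow> 'a set set" where
  "setA_neg M G R F Y0 = {A \<in> sets G. \<exists>Y\<in>F. holds_on M (\<lambda>x y. \<not> R x y) Y Y0 A}"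

end

theory Submission
  imports Defs
begin

text \<open>
  Proof idea (an exhaustion argument).  The family \<open>A\<^sup>\<turnstile>\<close> of sets on which some
  member of F violates the relation is hereditary (closed under measurable
  subsets), and the gluing hypothesis makes it closed under countable disjoint
  unions; hence it is closed under arbitrary countable unions.  In a finite
  measure space every nonempty family of measurable sets closed under countable
  unions contains a set U of maximal measure.  Its complement lies in \<open>A\<close>:
  if some Y in F violated the relation on a non-null part C of the complement,
  then C would belong to \<open>A\<^sup>\<turnstile>\<close> and U \<union> C would be a member of strictly larger
  measure.  Taking \<open>A\<^sub>M\<close> = space - U and \<open>A\<^sub>M\<^sup>\<turnstile>\<close> = U proves the theorem.
\<close>

definition closed_under_gluing ::
    "'a measure \<Rightarrow> 'a measure \<Rightarrow> (ereal \<Rightarrow> ereal \<Rightarrow> bool) \<Rightarrow> ('a \<Rightarrow> ereal) set \<Rightarrow> ('a \<Rightarrow> ereal) \<Rightarrow> bool"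
  where "closed_under_gluing M G R F Y0 \<longleftrightarrow>
    (\<forall>(A :: nat \<Rightarrow> 'a set) Ys. disjoint_family A \<longrightarrow> (\<forall>i. A i \<in> setA_neg M G R F Y0) \<longrightarrow>
      (\<forall>i. Ys i \<in> F \<and> holds_on M (\<lambda>x y. \<not> R x y) (Ys i) Y0 (A i)) \<longrightarrow>
      (\<lambda>\<omega>. \<Sum>i. Ys i \<omega> * indicator (A i) \<omega>) \<in> F)"

lemma setA_neg_subset:
  assumes "A \<in> setA_neg M G R F Y0" and "B \<in> sets G" and "B \<subseteq> A"
  shows "B \<in> setA_neg M G R F Y0"
  using assms unfolding setA_neg_def holds_on_def
  by (auto elim!: eventually_mono)

text \<open>The gluing hypothesis makes \<open>A\<^sup>\<turnstile>\<close> closed under countable disjoint unions: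
  the glued variable agrees with the i-th witness on the i-th set.\<close>

lemma setA_neg_disjoint_UN:
  fixes A :: "nat \<Rightarrow> 'a set"
  assumes glue: "closed_under_gluing M G R F Y0"
    and disj: "disjoint_family A" and A: "\<forall>i. A i \<in> setA_neg M G R F Y0"
  shows "(\<Union>i. A i) \<in> setA_neg M G R F Y0"
proof -
  have "\<forall>i. \<exists>Y. Y \<in> F \<and> holds_on M (\<lambda>x y. \<not> R x y) Y Y0 (A i)"
    using A unfolding setA_neg_def by blast
  then obtain Ys where Ys: "\<forall>i. Ys i \<in> F \<and> holds_on M (\<lambda>x y. \<not> R x y) (Ys i) Y0 (A i)"
    by metis
  define Y where "Y = (\<lambda>\<omega>. \<Sum>i. Ys i \<omega> * indicator (A i) \<omega>)"
  have "Y \<in> F"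
    using glue disj A Ys unfolding closed_under_gluing_def Y_def by blast
  have Y_on_piece: "Y \<omega> = Ys i \<omega>" if "\<omega> \<in> A i" for i \<omega>
  proof -
    have "(\<lambda>j. Ys j \<omega> * indicator (A j) \<omega>) = (\<lambda>j. if j = i then Ys i \<omega> else 0)"
      using disj that by (auto simp: disjoint_family_on_def indicator_def fun_eq_iff)
    moreover have "(\<lambda>j. if j = i then Ys i \<omega> else 0) sums Ys i \<omega>"
      using sums_single[where f="\<lambda>_. Ys i \<omega>" and i=i] by simp
    ultimately show ?thesis unfolding Y_def by (simp add: sums_unique[symmetric])
  qed
  have "AE \<omega> in M. \<forall>i. \<omega> \<in> A i \<longrightarrow> \<not> R (Ys i \<omega>) (Y0 \<omega>)"
    using Ys by (simp add: holds_on_def AE_all_countable)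
  then have "holds_on M (\<lambda>x y. \<not> R x y) Y Y0 (\<Union>i. A i)"
    unfolding holds_on_def by eventually_elim (auto simp: Y_on_piece)
  moreover have "(\<Union>i. A i) \<in> sets G"
    using A by (intro sets.countable_UN) (auto simp: setA_neg_def)
  ultimately show ?thesis using \<open>Y \<in> F\<close> by (auto simp: setA_neg_def)
qed

text \<open>Consequently \<open>A\<^sup>\<turnstile>\<close> is closed under arbitrary countable unions: disjointify the
  sequence and use heredity for the disjointed pieces.\<close>

lemma setA_neg_UN:
  fixes A :: "nat \<Rightarrow> 'a set"
  assumes glue: "closed_under_gluing M G R F Y0"
    and A: "range A \<subseteq> setA_neg M G R F Y0"
  shows "(\<Union>i. A i) \<in> setA_neg M G R F Y0"
proof -
  have "range A \<subseteq> sets G" using A by (auto simp: setA_neg_def)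
  then have disj_G: "range (disjointed A) \<subseteq> sets G" by (rule sets.range_disjointed_sets)
  have "\<forall>i. disjointed A i \<in> setA_neg M G R F Y0"
  proof
    fix i
    have "A i \<in> setA_neg M G R F Y0" using A by auto
    moreover have "disjointed A i \<in> sets G" using disj_G by auto
    ultimately show "disjointed A i \<in> setA_neg M G R F Y0"
      by (rule setA_neg_subset[OF _ _ disjointed_subset])
  qed
  then have "(\<Union>i. disjointed A i) \<in> setA_neg M G R F Y0"
    by (rule setA_neg_disjoint_UN[OF glue disjoint_family_disjointed])
  then show ?thesis unfolding UN_disjointed_eq .
qed

text \<open>Exhaustion: in a finite measure space, a nonempty family of measurable sets
  closed under countable unions contains a set of maximal measure (the union of
  a sequence whose measures approach the supremum).\<close>

lemma (in finite_measure) exists_max_measure_UN_closed: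
  assumes N: "N \<subseteq> sets M" "N \<noteq> {}"
    and UN_closed: "\<And>A. range A \<subseteq> N \<Longrightarrow> (\<Union>i::nat. A i) \<in> N"
  shows "\<exists>U\<in>N. \<forall>A\<in>N. measure M A \<le> measure M U"
proof -
  define s where "s = (SUP A\<in>N. measure M A)"
  have bdd: "bdd_above (measure M ` N)"
    by (rule bdd_aboveI[where M="measure M (space M)"]) (auto intro: bounded_measure)
  have le_s: "measure M A \<le> s" if "A \<in> N" for A
    unfolding s_def by (rule cSUP_upper[OF that bdd])
  have "\<forall>n. \<exists>A\<in>N. s - inverse (real (Suc n)) < measure M A"
  proof
    fix n
    have "s - inverse (real (Suc n)) < s" by simp
    then show "\<exists>A\<in>N. s - inverse (real (Suc n)) < measure M A"
      unfolding s_def using less_cSUP_iff[OF N(2) bdd] by blast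
  qed
  then obtain A where A: "\<And>n. A n \<in> N" "\<And>n. s - inverse (real (Suc n)) < measure M (A n)"
    by metis
  define U where "U = (\<Union>i. A i)"
  have "U \<in> N" unfolding U_def using A(1) by (intro UN_closed) auto
  have "s \<le> measure M U"
  proof (rule ccontr)
    assume "\<not> s \<le> measure M U"
    then obtain n where n: "inverse (real (Suc n)) < s - measure M U"
      using reals_Archimedean[of "s - measure M U"] by auto
    have "measure M (A n) \<le> measure M U"
      using \<open>U \<in> N\<close> A(1) N(1) unfolding U_def by (intro finite_measure_mono) auto
    with A(2)[of n] n show False by simp
  qed
  with \<open>U \<in> N\<close> le_s show ?thesis by force
qed

lemma measurable_relation_pred:
  fixes Y Y0 :: "'a \<Rightarrow> ereal"
  assumes "R \<in> {(\<ge>), (\<le>), (=), (>), (<)}"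
    and "Y \<in> borel_measurable N" and "Y0 \<in> borel_measurable N"
  shows "Measurable.pred N (\<lambda>\<omega>. R (Y \<omega>) (Y0 \<omega>))"
proof -
  from assms(1) have "R = (\<ge>) \<or> R = (\<le>) \<or> R = (=) \<or> R = (>) \<or> R = (<)" by simp
  then show ?thesis using assms(2,3) by (elim disjE; simp; measurable)
qed

text \<open>The complement of a member of \<open>A\<^sup>\<turnstile>\<close> of maximal measure lies in \<open>A\<close>: a non-null
  violation set C outside U could be glued to U, increasing its measure.\<close>

lemma compl_max_setA_neg_in_setA:
  assumes "finite_measure M" and "subalgebra M G"
    and "R \<in> {(\<ge>), (\<le>), (=), (>), (<)}"
    and "F \<subseteq> L0bar G" and "Y0 \<in> L0bar G"
    and glue: "closed_under_gluing M G R F Y0"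
    and U: "U \<in> setA_neg M G R F Y0"
    and U_max: "\<forall>A \<in> setA_neg M G R F Y0. measure M A \<le> measure M U"
  shows "space M - U \<in> setA M G R F Y0"
proof -
  interpret P: finite_measure M by fact
  have sets_G: "sets G \<subseteq> sets M" and space_G: "space G = space M"
    using assms(2) by (auto simp: subalgebra_def)
  have UG: "U \<in> sets G" using U by (auto simp: setA_neg_def)
  then have UM: "U \<in> sets M" using sets_G by auto
  have complG: "space M - U \<in> sets G" using UG space_G by (metis sets.compl_sets)
  have "holds_on M R Y Y0 (space M - U)" if YF: "Y \<in> F" for Y
  proof (rule ccontr)
    assume violated: "\<not> holds_on M R Y Y0 (space M - U)"
    define C where "C = {\<omega> \<in> space M. \<omega> \<notin> U \<and> \<not> R (Y \<omega>) (Y0 \<omega>)}"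
    have rel_G: "Measurable.pred G (\<lambda>\<omega>. R (Y \<omega>) (Y0 \<omega>))"
      using measurable_relation_pred[OF assms(3)] YF assms(4,5) by (auto simp: L0bar_def)
    have CG: "C \<in> sets G" unfolding C_def space_G[symmetric] using UG rel_G by measurable
    then have CM: "C \<in> sets M" using sets_G by auto
    have "C \<notin> null_sets M"
    proof
      assume "C \<in> null_sets M"
      then have "AE \<omega> in M. \<omega> \<notin> C" by (rule AE_not_in)
      then have "holds_on M R Y Y0 (space M - U)"
        unfolding holds_on_def C_def by eventually_elim auto
      with violated show False by contradiction
    qed
    then have C_pos: "measure M C > 0"
      using CM P.emeasure_eq_measure by (auto simp: null_sets_def zero_less_measure_iff)
    have CN: "C \<in> setA_neg M G R F Y0"
      using CG YF unfolding setA_neg_def holds_on_def C_def by auto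
    have "(\<Union>i::nat. if i = 0 then U else C) \<in> setA_neg M G R F Y0"
      by (rule setA_neg_UN[OF glue]) (use U CN in auto)
    moreover have "(\<Union>i::nat. if i = 0 then U else C) = U \<union> C"
      by (auto split: if_splits)
    ultimately have UCN: "U \<union> C \<in> setA_neg M G R F Y0" by simp
    have "U \<inter> C = {}" unfolding C_def by auto
    then have "measure M (U \<union> C) = measure M U + measure M C"
      using UM CM by (simp add: P.finite_measure_Union)
    with U_max UCN C_pos show False by force
  qed
  with complG show ?thesis by (auto simp: setA_def)
qed

theorem mainTheorem7:
  fixes M G :: "'a measure" and R :: "ereal \<Rightarrow> ereal \<Rightarrow> bool"
    and F :: "('a \<Rightarrow> ereal) set" and Y0 :: "'a \<Rightarrow> ereal"
  assumes "prob_space M"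
    and "subalgebra M G"
    and "R \<in> {(\<ge>), (\<le>), (=), (>), (<)}"
    and "F \<subseteq> L0bar G" and "F \<noteq> {}"
    and "Y0 \<in> L0bar G"
    and "\<And>A Ys. disjoint_family A \<Longrightarrow> (\<forall>i. A i \<in> setA_neg M G R F Y0) \<Longrightarrow>
           (\<forall>i. Ys i \<in> F \<and> holds_on M (\<lambda>x y. \<not> R x y) (Ys i) Y0 (A i)) \<Longrightarrow>
           (\<lambda>\<omega>. \<Sum>i. Ys i \<omega> * indicator (A i) \<omega>) \<in> F"
  shows "\<exists>AM \<in> setA M G R F Y0. \<exists>AMn \<in> setA_neg M G R F Y0.
           measure M (AM \<inter> AMn) = 0 \<and> measure M (AM \<union> AMn) = 1 \<and>
           (\<forall>Y\<in>F. holds_on M R Y Y0 AM) \<and>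
           (\<exists>Ybar\<in>F. holds_on M (\<lambda>x y. \<not> R x y) Ybar Y0 AMn)"
proof -
  interpret P: prob_space M by fact
  have glue: "closed_under_gluing M G R F Y0"
    using assms(7) unfolding closed_under_gluing_def by blast
  let ?N = "setA_neg M G R F Y0"
  have "\<exists>U\<in>?N. \<forall>A\<in>?N. measure M A \<le> measure M U"
  proof (rule P.exists_max_measure_UN_closed)
    show "?N \<subseteq> sets M" using assms(2) by (auto simp: setA_neg_def subalgebra_def)
    show "?N \<noteq> {}" using assms(5) by (auto simp: setA_neg_def holds_on_def)
  qed (rule setA_neg_UN[OF glue])
  then obtain U where U: "U \<in> ?N" and U_max: "\<forall>A\<in>?N. measure M A \<le> measure M U"
    by blast
  define AM where "AM = space M - U"
  have AM: "AM \<in> setA M G R F Y0"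
    unfolding AM_def using compl_max_setA_neg_in_setA[OF P.finite_measure_axioms assms(2-4,6) glue U U_max] .
  have "U \<subseteq> space M" using U assms(2) sets.sets_into_space
    by (auto simp: setA_neg_def subalgebra_def)
  then have "AM \<inter> U = {}" "AM \<union> U = space M" unfolding AM_def by auto
  moreover obtain Ybar where "Ybar \<in> F" "holds_on M (\<lambda>x y. \<not> R x y) Ybar Y0 U"
    using U by (auto simp: setA_neg_def)
  ultimately show ?thesis
    using AM U P.prob_space by (intro bexI[OF _ AM] bexI[OF _ U]) (auto simp: setA_def)
qed

end
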